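(* Let $\mathcal{G}$ be an open directed graph with incidence operator $B=B_i\oplus B_b$. The Kirchhoff-Dirac structure $$\mathcal{D}_K(\mathcal{G})=\{(f_1,e^1,f_b,e^b)\in\Lambda_1\times\Lambda^1\times\Lambda_b\times\Lambda^b\mid B_if_1=0,\ B_bf_1=f_b,\ \exists e^{0i}\in\Lambda^{0i}:\ e^1=-B_i^*e^{0i}-B_b^*e^b\}$$ (with flow variables $(f_1,f_b)\in\Lambda_1\times\Lambda_b$ and effort variables $(e^1,e^b)\in\Lambda^1\times\Lambda^b$) is a separable Dirac structure.
   Context: A directed graph has finite vertex set $\mathcal{V}$ ($N$ vertices) and edge set $\mathcal{E}$ ($M$ edges), each edge having distinct tail and head vertices; its incidence matrix $\hat B$ is $N\times M$ with $(i,j)$ entry $1$ if edge $j$ originates at vertex $i$, $-1$ if edge $j$ points towards vertex $i$, $0$ otherwise. Fix a finite-dimensional real vector space $\mathcal{R}$. $\Lambda_0$ (resp. $\Lambda_1$) is the space of functions $\mathcal{V}\to\mathcal{R}$ (resp. $\mathcal{E}\to\mathcal{R}$), with duals $\Lambda^0,\Lambda^1$ (pairings summed over vertices/edges). The incidence operator $B:\Lambda_1\to\Lambda_0$ has matrix $\hat B\otimes I$; $B^*$ is its adjoint. An open graph has a designated set $\mathcal{V}_b$ of boundary vertices, the others $\mathcal{V}_i$ internal; this splits $\Lambda_0=\Lambda_{0i}\oplus\Lambda_{0b}$, $\Lambda^0=\Lambda^{0i}\oplus\Lambda^{0b}$ and $B=B_i\oplus B_b$. The boundary space $\Lambda_b$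 is the space of functions $\mathcal{V}_b\to\mathcal{R}$ (identified with $\Lambda_{0b}$, so $B_b:\Lambda_1\to\Lambda_b$), with dual $\Lambda^b$. A Dirac structure on a flow space $\mathcal{F}$ is a subspace $\mathcal{D}\subset\mathcal{F}\times\mathcal{F}^*$ with $\langle e\mid f\rangle=0$ for all $(f,e)\in\mathcal{D}$ and $\dim\mathcal{D}=\dim\mathcal{F}$; it is separable if $\langle e_a\mid f_b\rangle=0$ for all $(f_a,e_a),(f_b,e_b)\in\mathcal{D}$. *)

theory Defs
  imports "HOL-Analysis.Analysis" "HOL-Library.Function_Algebras" "HOL-Library.Product_Plus"
begin

(* Functions on a finite set S with values in a
   space are represented extensionally (value 0 outside S). *)

definition open_digraph ::
  "'v set \<Rightarrow> 'e set \<Rightarrow> ('e \<Rightarrow> 'v) \<Rightarrow> ('e \<Rightarrow> 'v) \<Rightarrow> 'v set \<Rightarrow> bool" where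
  "open_digraph V E src tgt Vb \<longleftrightarrow> finite V \<and> finite E \<and> Vb \<subseteq> V \<and>
     (\<forall>x\<in>E. src x \<in> V \<and> tgt x \<in> V \<and> src x \<noteq> tgt x)"

definition incid :: "('e \<Rightarrow> 'v) \<Rightarrow> ('e \<Rightarrow> 'v) \<Rightarrow> 'v \<Rightarrow> 'e \<Rightarrow> real" where
  "incid src tgt v x = (if src x = v then 1 else if tgt x = v then -1 else 0)"

definition prim_space :: "'a set \<Rightarrow> ('a \<Rightarrow> 'r::real_vector) set" where
  "prim_space S = {f. \<forall>x. x \<notin> S \<longrightarrow> f x = 0}"

definition dual_space :: "'a set \<Rightarrow> ('a \<Rightarrow> 'r::real_vector \<Rightarrow> real) set" where
  "dual_space S = {e. (\<forall>x\<in>S. linear (e x)) \<and> (\<forall>x. x \<notin> S \<longrightarrow> e x = 0)}"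

definition pairing :: "'a set \<Rightarrow> ('a \<Rightarrow> 'r \<Rightarrow> real) \<Rightarrow> ('a \<Rightarrow> 'r) \<Rightarrow> real" where
  "pairing S e f = (\<Sum>x\<in>S. e x (f x))"

(* incidence operator restricted to a vertex subset W (W = V_i gives B_i, W = V_b gives B_b) *)
definition incB :: "'e set \<Rightarrow> ('e \<Rightarrow> 'v) \<Rightarrow> ('e \<Rightarrow> 'v) \<Rightarrow> 'v set \<Rightarrow> ('e \<Rightarrow> 'r::real_vector) \<Rightarrow> ('v \<Rightarrow> 'r)" where
  "incB E src tgt W f = (\<lambda>v. if v \<in> W then (\<Sum>x\<in>E. incid src tgt v x *\<^sub>R f x) else 0)"

definition incB_adj :: "'e set \<Rightarrow> ('e \<Rightarrow> 'v) \<Rightarrow> ('e \<Rightarrow> 'v) \<Rightarrow> 'v set \<Rightarrow> ('v \<Rightarrow> 'r \<Rightarrow> real) \<Rightarrow> ('e \<Rightarrow> 'r \<Rightarrow> real)" where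
  "incB_adj E src tgt W e = (\<lambda>x. if x \<in> E then (\<lambda>r. \<Sum>v\<in>W. incid src tgt v x * e v r) else 0)"

definition scale_prim :: "real \<Rightarrow> ('a \<Rightarrow> 'r::real_vector) \<Rightarrow> ('a \<Rightarrow> 'r)" where
  "scale_prim c f = (\<lambda>x. c *\<^sub>R f x)"

definition scale_dual :: "real \<Rightarrow> ('a \<Rightarrow> 'r \<Rightarrow> real) \<Rightarrow> ('a \<Rightarrow> 'r \<Rightarrow> real)" where
  "scale_dual c e = (\<lambda>x r. c * e x r)"

type_synonym ('e,'v,'r) flow = "('e \<Rightarrow> 'r) \<times> ('v \<Rightarrow> 'r)"
type_synonym ('e,'v,'r) effort = "('e \<Rightarrow> 'r \<Rightarrow> real) \<times> ('v \<Rightarrow> 'r \<Rightarrow> real)"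

definition scale_flow :: "real \<Rightarrow> ('e,'v,'r::real_vector) flow \<Rightarrow> ('e,'v,'r) flow" where
  "scale_flow c p = (scale_prim c (fst p), scale_prim c (snd p))"

definition scale_bond :: "real \<Rightarrow> ('e,'v,'r::real_vector) flow \<times> ('e,'v,'r) effort
                                \<Rightarrow> ('e,'v,'r) flow \<times> ('e,'v,'r) effort" where
  "scale_bond c q = (scale_flow c (fst q), (scale_dual c (fst (snd q)), scale_dual c (snd (snd q))))"

definition flow_space :: "'e set \<Rightarrow> 'v set \<Rightarrow> ('e,'v,'r::real_vector) flow set" where
  "flow_space E Vb = prim_space E \<times> prim_space Vb"

definition effort_space :: "'e set \<Rightarrow> 'v set \<Rightarrow> ('e,'v,'r::real_vector) effort set" where
  "effort_space E Vb = dual_space E \<times> dual_space Vb"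

definition flow_pairing :: "'e set \<Rightarrow> 'v set \<Rightarrow> ('e,'v,'r) effort \<Rightarrow> ('e,'v,'r) flow \<Rightarrow> real" where
  "flow_pairing E Vb e f = pairing E (fst e) (fst f) + pairing Vb (snd e) (snd f)"

definition dirac_structure :: "'e set \<Rightarrow> 'v set \<Rightarrow> (('e,'v,'r::real_vector) flow \<times> ('e,'v,'r) effort) set \<Rightarrow> bool" where
  "dirac_structure E Vb D \<longleftrightarrow>
     module.subspace scale_bond D \<and>
     D \<subseteq> flow_space E Vb \<times> effort_space E Vb \<and>
     (\<forall>(f, e)\<in>D. flow_pairing E Vb e f = 0) \<and>
     vector_space.dim scale_bond D = vector_space.dim scale_flow (flow_space E Vb :: ('e,'v,'r) flow set)"

definition separable_dirac :: "'e set \<Rightarrow> 'v set \<Rightarrow> (('e,'v,'r::real_vector) flow \<times> ('e,'v,'r) effort) set \<Rightarrow> bool" where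
  "separable_dirac E Vb D \<longleftrightarrow> dirac_structure E Vb D \<and>
     (\<forall>(fa, ea)\<in>D. \<forall>(fb, eb)\<in>D. flow_pairing E Vb ea fb = 0)"

definition kirchhoff_dirac ::
  "'v set \<Rightarrow> 'e set \<Rightarrow> ('e \<Rightarrow> 'v) \<Rightarrow> ('e \<Rightarrow> 'v) \<Rightarrow> 'v set \<Rightarrow> (('e,'v,'r::real_vector) flow \<times> ('e,'v,'r) effort) set" where
  "kirchhoff_dirac V E src tgt Vb =
     {((f1, fb), (e1, eb)).
        f1 \<in> prim_space E \<and> fb \<in> prim_space Vb \<and> e1 \<in> dual_space E \<and> eb \<in> dual_space Vb \<and>
        incB E src tgt (V - Vb) f1 = 0 \<and>
        incB E src tgt Vb f1 = fb \<and>
        (\<exists>e0i \<in> dual_space (V - Vb).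
           e1 = - incB_adj E src tgt (V - Vb) e0i - incB_adj E src tgt Vb eb)}"

end

theory Submission
  imports Defs
begin

text \<open>
  Separability is adjointness: for elements of the Kirchhoff--Dirac structure the pairing of
  \<open>e\<^sup>1 = - B\<^sub>i\<^sup>* e\<^sup>0\<^sup>i - B\<^sub>b\<^sup>* e\<^sup>b\<close> with \<open>f\<^sub>1\<close> equals
  \<open>- e\<^sup>0\<^sup>i(B\<^sub>i f\<^sub>1) - e\<^sup>b(B\<^sub>b f\<^sub>1) = - e\<^sup>b(f\<^sub>b)\<close>, which cancels the boundary term.
  For the dimension, identify \<open>\<R>\<^sup>*\<close> with \<open>\<R>\<close> by the inner product. Then
  \<open>(f\<^sub>1, f\<^sub>b, e\<^sup>1, e\<^sup>b) \<mapsto> (f\<^sub>1 - e\<^sup>1 - B\<^sub>b\<^sup>T e\<^sup>b, e\<^sup>b) = (f\<^sub>1 + B\<^sub>i\<^sup>T e\<^sup>0\<^sup>i, e\<^sup>b)\<close>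
  is a linear bijection onto the flow space \<open>\<Lambda>\<^sub>1 \<times> \<Lambda>\<^sub>b\<close>: it is injective because
  \<open>ker B\<^sub>i\<close> is orthogonal to \<open>im B\<^sub>i\<^sup>T\<close>, and surjective because these two subspaces
  together span \<open>\<Lambda>\<^sub>1\<close>, which follows from an orthogonal projection onto \<open>im B\<^sub>i\<^sup>T\<close>.
\<close>

lemma vector_space_scale_prim: "vector_space (scale_prim :: real \<Rightarrow> ('a \<Rightarrow> 'r::real_vector) \<Rightarrow> _)"
  by unfold_locales (auto simp: scale_prim_def fun_eq_iff algebra_simps)

lemma vector_space_scale_flow: "vector_space (scale_flow :: real \<Rightarrow> ('e,'v,'r::real_vector) flow \<Rightarrow> _)"
  by unfold_locales (auto simp: scale_flow_def scale_prim_def fun_eq_iff algebra_simps prod_eq_iff)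

lemma vector_space_scale_bond:
  "vector_space (scale_bond :: real \<Rightarrow> ('e,'v,'r::real_vector) flow \<times> ('e,'v,'r) effort \<Rightarrow> _)"
  by unfold_locales
    (auto simp: scale_bond_def scale_dual_def scale_flow_def scale_prim_def fun_eq_iff algebra_simps prod_eq_iff)

interpretation prim: vector_space "scale_prim :: real \<Rightarrow> ('a \<Rightarrow> 'r::real_vector) \<Rightarrow> _"
  by (rule vector_space_scale_prim)

interpretation bond: vector_space "scale_bond :: real \<Rightarrow> ('e,'v,'r::real_vector) flow \<times> ('e,'v,'r) effort \<Rightarrow> _"
  by (rule vector_space_scale_bond)

lemma dim_image_eq_of_inj_on:
  assumes "Vector_Spaces.linear s1 s2 L" and "module.subspace s1 D" and "inj_on L D"
  shows "vector_space.dim s2 (L ` D) = vector_space.dim s1 D"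
proof -
  interpret L: Vector_Spaces.linear s1 s2 L by (rule assms(1))
  obtain B where B: "B \<subseteq> D" "L.vs1.independent B" "D \<subseteq> L.vs1.span B" "card B = L.vs1.dim D"
    using L.vs1.basis_exists by blast
  have "L.vs1.span B = D"
    using B assms(2) L.vs1.span_minimal L.vs1.span_mono by (metis subset_antisym)
  then have "L.vs2.independent (L ` B)"
    using L.independent_injective_image[OF B(2)] assms(3) by simp
  moreover have "L ` D \<subseteq> L.vs2.span (L ` B)" using L.spans_image[OF B(3)] .
  ultimately have "card (L ` B) = L.vs2.dim (L ` D)"
    using B(1) by (intro L.vs2.basis_card_eq_dim) auto
  moreover have "card (L ` B) = card B" using assms(3) B(1) card_image inj_on_subset by blast
  ultimately show ?thesis using B(4) by simp
qed

lemma
  shows prim_space_zero: "0 \<in> prim_space S"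
    and prim_space_add: "f \<in> prim_space S \<Longrightarrow> g \<in> prim_space S \<Longrightarrow> f + g \<in> prim_space S"
    and prim_space_diff: "f \<in> prim_space S \<Longrightarrow> g \<in> prim_space S \<Longrightarrow> f - g \<in> prim_space S"
    and prim_space_scale: "f \<in> prim_space S \<Longrightarrow> scale_prim c f \<in> prim_space S"
  by (simp_all add: prim_space_def scale_prim_def)

lemma
  shows dual_space_zero: "0 \<in> dual_space S"
    and dual_space_add: "e \<in> dual_space S \<Longrightarrow> e' \<in> dual_space S \<Longrightarrow> e + e' \<in> dual_space S"
    and dual_space_diff: "e \<in> dual_space S \<Longrightarrow> e' \<in> dual_space S \<Longrightarrow> e - e' \<in> dual_space S"
    and dual_space_uminus: "e \<in> dual_space S \<Longrightarrow> - e \<in> dual_space S"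
    and dual_space_scale: "e \<in> dual_space S \<Longrightarrow> scale_dual c e \<in> dual_space S"
  by (auto simp: dual_space_def scale_dual_def linear_add linear_scale algebra_simps intro!: linearI)

lemma
  shows incB_add: "incB E s t W (f + g) = incB E s t W f + incB E s t W g"
    and incB_scale: "incB E s t W (scale_prim c f) = scale_prim c (incB E s t W f)"
    and incB_zero: "incB E s t W 0 = 0"
    and incB_in_prim_space: "incB E s t W f \<in> prim_space W"
  by (auto simp: incB_def prim_space_def scale_prim_def fun_eq_iff scaleR_add_right sum.distrib
      scaleR_sum_right mult.commute)

lemma
  shows incB_adj_add: "incB_adj E s t W (e + e') = incB_adj E s t W e + incB_adj E s t W e'"
    and incB_adj_scale: "incB_adj E s t W (scale_dual c e) = scale_dual c (incB_adj E s t W e)"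
    and incB_adj_zero: "incB_adj E s t W 0 = 0"
  by (auto simp: incB_adj_def scale_dual_def fun_eq_iff sum.distrib distrib_left sum_distrib_left
      mult.left_commute)

lemma incB_adj_in_dual_space:
  assumes "e \<in> dual_space W"
  shows "incB_adj E s t W e \<in> dual_space E"
proof -
  have "linear (\<lambda>r. \<Sum>v\<in>W. incid s t v x * e v r)" for x
    using assms by (intro linearI)
      (auto simp: dual_space_def linear_add linear_scale sum.distrib sum_distrib_left algebra_simps
        intro!: sum.cong)
  then show ?thesis by (auto simp: dual_space_def incB_adj_def)
qed

lemma pairing_incB_adj:
  assumes "e \<in> dual_space W"
  shows "pairing E (incB_adj E s t W e) f = pairing W e (incB E s t W f)"
proof -
  have "pairing W e (incB E s t W f) = (\<Sum>v\<in>W. \<Sum>x\<in>E. incid s t v x * e v (f x))"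
    unfolding pairing_def incB_def
    using assms by (auto simp: dual_space_def linear_sum linear_scale intro!: sum.cong)
  also have "\<dots> = (\<Sum>x\<in>E. \<Sum>v\<in>W. incid s t v x * e v (f x))" by (rule sum.swap)
  finally show ?thesis unfolding pairing_def incB_adj_def by simp
qed

subsection \<open>The Kirchhoff--Dirac structure is an isotropic subspace\<close>

lemma mem_kirchhoff_dirac:
  "((f1, fb), (e1, eb)) \<in> kirchhoff_dirac V E s t Vb \<longleftrightarrow>
     f1 \<in> prim_space E \<and> fb \<in> prim_space Vb \<and> e1 \<in> dual_space E \<and> eb \<in> dual_space Vb \<and>
     incB E s t (V - Vb) f1 = 0 \<and> incB E s t Vb f1 = fb \<and>
     (\<exists>e0i \<in> dual_space (V - Vb). e1 = - incB_adj E s t (V - Vb) e0i - incB_adj E s t Vb eb)"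
  by (simp add: kirchhoff_dirac_def)

lemma kirchhoff_dirac_subset:
  "kirchhoff_dirac V E s t Vb \<subseteq> flow_space E Vb \<times> effort_space E Vb"
  by (auto simp: kirchhoff_dirac_def flow_space_def effort_space_def)

lemma subspace_kirchhoff_dirac:
  "bond.subspace (kirchhoff_dirac V E s t Vb :: (('e,'v,'r::real_vector) flow \<times> ('e,'v,'r) effort) set)"
  unfolding bond.subspace_def
proof (intro conjI ballI allI)
  show "0 \<in> (kirchhoff_dirac V E s t Vb :: (('e,'v,'r) flow \<times> ('e,'v,'r) effort) set)"
    unfolding zero_prod_def mem_kirchhoff_dirac
    by (auto simp: prim_space_zero dual_space_zero incB_zero incB_adj_zero intro!: bexI[of _ 0])
next
  fix x y :: "('e,'v,'r) flow \<times> ('e,'v,'r) effort"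
  assume x: "x \<in> kirchhoff_dirac V E s t Vb" and y: "y \<in> kirchhoff_dirac V E s t Vb"
  obtain f1 fb e1 eb f1' fb' e1' eb' where xy: "x = ((f1, fb), (e1, eb))" "y = ((f1', fb'), (e1', eb'))"
    by (metis prod.collapse)
  from x y obtain e0 e0' where e0:
    "e0 \<in> dual_space (V - Vb)" "e1 = - incB_adj E s t (V - Vb) e0 - incB_adj E s t Vb eb"
    "e0' \<in> dual_space (V - Vb)" "e1' = - incB_adj E s t (V - Vb) e0' - incB_adj E s t Vb eb'"
    unfolding xy mem_kirchhoff_dirac by blast
  then have "e1 + e1' = - incB_adj E s t (V - Vb) (e0 + e0') - incB_adj E s t Vb (eb + eb')"
    unfolding incB_adj_add by (simp only:) (simp add: algebra_simps)
  with x y e0 show "x + y \<in> kirchhoff_dirac V E s t Vb"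
    unfolding xy mem_kirchhoff_dirac add_Pair
    by (intro conjI prim_space_add dual_space_add bexI[of _ "e0 + e0'"]) (simp_all add: incB_add)
next
  fix c :: real and x :: "('e,'v,'r) flow \<times> ('e,'v,'r) effort"
  assume x: "x \<in> kirchhoff_dirac V E s t Vb"
  obtain f1 fb e1 eb where xe: "x = ((f1, fb), (e1, eb))" by (metis prod.collapse)
  from x obtain e0 where e0:
    "e0 \<in> dual_space (V - Vb)" "e1 = - incB_adj E s t (V - Vb) e0 - incB_adj E s t Vb eb"
    unfolding xe mem_kirchhoff_dirac by blast
  then have "scale_dual c e1 =
      - incB_adj E s t (V - Vb) (scale_dual c e0) - incB_adj E s t Vb (scale_dual c eb)"
    unfolding incB_adj_scale e0(2) by (simp add: scale_dual_def fun_eq_iff algebra_simps)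
  with x e0 show "scale_bond c x \<in> kirchhoff_dirac V E s t Vb"
    unfolding xe scale_bond_def scale_flow_def mem_kirchhoff_dirac fst_conv snd_conv
    by (intro conjI prim_space_scale dual_space_scale bexI[of _ "scale_dual c e0"])
      (simp_all add: incB_scale incB_zero)
qed

lemma flow_pairing_kirchhoff_dirac:
  assumes "((f1, fb), (e1, eb)) \<in> kirchhoff_dirac V E s t Vb"
    and "((f1', fb'), (e1', eb')) \<in> kirchhoff_dirac V E s t Vb"
  shows "flow_pairing E Vb (e1, eb) (f1', fb') = 0"
proof -
  from assms(1) obtain e0 where e0: "e0 \<in> dual_space (V - Vb)"
      "e1 = - incB_adj E s t (V - Vb) e0 - incB_adj E s t Vb eb"
    and eb: "eb \<in> dual_space Vb"
    by (auto simp: mem_kirchhoff_dirac)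
  from assms(2) have f1': "incB E s t (V - Vb) f1' = 0" "incB E s t Vb f1' = fb'"
    by (auto simp: mem_kirchhoff_dirac)
  have "pairing E e1 f1' =
      - pairing E (incB_adj E s t (V - Vb) e0) f1' - pairing E (incB_adj E s t Vb eb) f1'"
    by (simp add: e0(2) pairing_def sum_negf sum_subtractf)
  also have "\<dots> =
      - pairing (V - Vb) e0 (incB E s t (V - Vb) f1') - pairing Vb eb (incB E s t Vb f1')"
    by (simp add: pairing_incB_adj e0(1) eb)
  also have "\<dots> = - pairing Vb eb fb'"
    using e0(1) by (auto simp: f1' pairing_def dual_space_def linear_0 intro!: sum.neutral)
  finally show ?thesis by (simp add: flow_pairing_def)
qed

subsection \<open>Riesz representation of efforts\<close>

definition riesz :: "('a \<Rightarrow> 'r::euclidean_space \<Rightarrow> real) \<Rightarrow> 'a \<Rightarrow> 'r" where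
  "riesz e = (\<lambda>x. \<Sum>b\<in>Basis. e x b *\<^sub>R b)"

definition inner_dual :: "('a \<Rightarrow> 'r::euclidean_space) \<Rightarrow> 'a \<Rightarrow> 'r \<Rightarrow> real" where
  "inner_dual w = (\<lambda>x r. w x \<bullet> r)"

lemma linear_eq_inner_Basis_sum:
  fixes \<phi> :: "'r::euclidean_space \<Rightarrow> real"
  assumes "linear \<phi>"
  shows "\<phi> r = (\<Sum>b\<in>Basis. \<phi> b *\<^sub>R b) \<bullet> r"
proof -
  have "\<phi> r = \<phi> (\<Sum>b\<in>Basis. (r \<bullet> b) *\<^sub>R b)" by (simp add: euclidean_representation)
  also have "\<dots> = (\<Sum>b\<in>Basis. (r \<bullet> b) * \<phi> b)"
    using assms by (simp add: linear_sum linear_scale)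
  also have "\<dots> = (\<Sum>b\<in>Basis. \<phi> b *\<^sub>R b) \<bullet> r"
    by (simp add: inner_sum_left inner_sum_right mult.commute inner_commute)
  finally show ?thesis .
qed

lemma riesz_inner:
  "e \<in> dual_space S \<Longrightarrow> x \<in> S \<Longrightarrow> e x r = riesz e x \<bullet> r"
  unfolding riesz_def dual_space_def using linear_eq_inner_Basis_sum by blast

lemma riesz_in_prim_space: "e \<in> dual_space S \<Longrightarrow> riesz e \<in> prim_space S"
  by (simp add: riesz_def dual_space_def prim_space_def)

lemma
  shows riesz_add: "riesz (e + e') = riesz e + riesz e'"
    and riesz_diff: "riesz (e - e') = riesz e - riesz e'"
    and riesz_uminus: "riesz (- e) = - riesz e"
    and riesz_scale: "riesz (scale_dual c e) = scale_prim c (riesz e)"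
    and riesz_zero: "riesz 0 = 0"
  by (simp_all add: riesz_def scale_dual_def scale_prim_def fun_eq_iff scaleR_add_left
      scaleR_diff_left sum.distrib sum_subtractf sum_negf scaleR_sum_right)

lemma inner_dual_in_dual_space: "w \<in> prim_space S \<Longrightarrow> inner_dual w \<in> dual_space S"
  by (auto simp: inner_dual_def dual_space_def prim_space_def fun_eq_iff inner_add_right
      intro!: linearI)

lemma riesz_inner_dual: "riesz (inner_dual w) = w"
  by (simp add: riesz_def inner_dual_def fun_eq_iff euclidean_representation)

lemma riesz_eq_0_iff:
  assumes "e \<in> dual_space S"
  shows "riesz e = 0 \<longleftrightarrow> e = 0"
proof
  assume "riesz e = 0"
  then have "e x r = 0" for x r
    using assms riesz_inner[OF assms, of x r] by (cases "x \<in> S") (auto simp: dual_space_def)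
  then show "e = 0" by (simp add: fun_eq_iff)
qed (simp add: riesz_zero)

subsection \<open>Orthogonal decomposition of edge functions\<close>

definition inner_on :: "'a set \<Rightarrow> ('a \<Rightarrow> 'r::real_inner) \<Rightarrow> ('a \<Rightarrow> 'r) \<Rightarrow> real" where
  "inner_on S f g = (\<Sum>x\<in>S. f x \<bullet> g x)"

definition incB_transp :: "'e set \<Rightarrow> ('e \<Rightarrow> 'v) \<Rightarrow> ('e \<Rightarrow> 'v) \<Rightarrow> 'v set \<Rightarrow> ('v \<Rightarrow> 'r::real_vector) \<Rightarrow> 'e \<Rightarrow> 'r" where
  "incB_transp E s t W u = (\<lambda>x. if x \<in> E then \<Sum>v\<in>W. incid s t v x *\<^sub>R u v else 0)"

lemma
  shows inner_on_add_right: "inner_on S f (g + h) = inner_on S f g + inner_on S f h"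
    and inner_on_diff_left: "inner_on S (f - h) g = inner_on S f g - inner_on S h g"
    and inner_on_scale_left: "inner_on S (scale_prim c f) g = c * inner_on S f g"
    and inner_on_scale_right: "inner_on S f (scale_prim c g) = c * inner_on S f g"
    and inner_on_zero_right: "inner_on S f 0 = 0"
  by (simp_all add: inner_on_def scale_prim_def inner_add_right inner_diff_left sum.distrib
      sum_subtractf sum_distrib_left)

lemma inner_on_self_eq_0:
  "finite S \<Longrightarrow> inner_on S f f = 0 \<Longrightarrow> x \<in> S \<Longrightarrow> f x = 0"
  unfolding inner_on_def by (subst (asm) sum_nonneg_eq_0_iff) auto

lemma inner_on_span_eq_0:
  assumes "\<forall>a\<in>A. inner_on S g a = 0" and "h \<in> prim.span A"
  shows "inner_on S g h = 0"
proof -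
  have "prim.subspace {h. inner_on S g h = 0}"
    by (auto simp: prim.subspace_def inner_on_zero_right inner_on_add_right inner_on_scale_right)
  then have "prim.span A \<subseteq> {h. inner_on S g h = 0}"
    using assms(1) by (intro prim.span_minimal) auto
  with assms(2) show ?thesis by auto
qed

lemma exists_projection_onto_span:
  fixes A :: "('a \<Rightarrow> 'r::real_inner) set"
  assumes "finite S" and "finite A"
  shows "\<exists>p\<in>prim.span A. \<forall>a\<in>A. inner_on S (g - p) a = 0"
  using assms(2)
proof (induction A arbitrary: g rule: finite_induct)
  case empty
  show ?case using prim.span_zero by blast
next
  case (insert a A)
  obtain p where p: "p \<in> prim.span A" "\<forall>b\<in>A. inner_on S (g - p) b = 0"
    using insert.IH by blast
  obtain q where q: "q \<in> prim.span A" "\<forall>b\<in>A. inner_on S (a - q) b = 0"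
    using insert.IH by blast
  define a' where "a' = a - q"
  have span_mono: "prim.span A \<subseteq> prim.span (insert a A)" by (rule prim.span_mono) auto
  have a': "a' \<in> prim.span (insert a A)"
    unfolding a'_def using q(1) span_mono by (intro prim.span_diff) (auto intro: prim.span_base)
  have a_split: "inner_on S h a = inner_on S h a' + inner_on S h q" for h
    by (simp add: a'_def flip: inner_on_add_right)
  show ?case
  proof (cases "inner_on S a' a' = 0")
    case True
    then have "inner_on S h a' = 0" for h
      using inner_on_self_eq_0[OF assms(1) True] by (simp add: inner_on_def)
    then have "inner_on S (g - p) a = 0"
      using a_split inner_on_span_eq_0[OF p(2) q(1)] by simp
    with p span_mono show ?thesis by blast
  next
    case False
    \<comment> \<open>Gram--Schmidt step: \<open>a'\<close> is orthogonal to \<open>A\<close>, so correcting along it keeps \<open>g - p\<close> orthogonal to \<open>A\<close>.\<close>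
    define c where "c = inner_on S (g - p) a' / inner_on S a' a'"
    define p' where "p' = p + scale_prim c a'"
    have p'_span: "p' \<in> prim.span (insert a A)"
      unfolding p'_def using p(1) span_mono a' by (intro prim.span_add prim.span_scale) auto
    have "g - p' = (g - p) - scale_prim c a'" by (simp add: p'_def)
    then have orth: "inner_on S (g - p') b = inner_on S (g - p) b - c * inner_on S a' b" for b
      by (simp only: inner_on_diff_left inner_on_scale_left)
    have orth_A: "\<forall>b\<in>A. inner_on S (g - p') b = 0"
      using p(2) q(2) by (simp add: orth a'_def)
    have "inner_on S (g - p') a' = 0" using False by (simp add: orth c_def)
    then have "inner_on S (g - p') a = 0"
      using a_split inner_on_span_eq_0[OF orth_A q(1)] by simp
    with orth_A p'_span show ?thesis by blast
  qed
qed

lemma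
  shows incB_transp_add: "incB_transp E s t W (u + u') = incB_transp E s t W u + incB_transp E s t W u'"
    and incB_transp_scale: "incB_transp E s t W (scale_prim c u) = scale_prim c (incB_transp E s t W u)"
  by (auto simp: incB_transp_def scale_prim_def fun_eq_iff scaleR_add_right sum.distrib
      scaleR_sum_right mult.commute)

lemma subspace_incB_transp_image: "prim.subspace (incB_transp E s t W ` prim_space W)"
proof -
  have "prim.subspace (prim_space W)"
    by (auto simp: prim.subspace_def prim_space_def scale_prim_def)
  moreover have "module_hom scale_prim scale_prim (incB_transp E s t W)"
    by (simp add: module_hom_iff prim.module_axioms incB_transp_add incB_transp_scale)
  ultimately show ?thesis by (rule module_hom.subspace_image[rotated])
qed

lemma inner_on_incB_transp:
  fixes k :: "'e \<Rightarrow> 'r::real_inner"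
  shows "inner_on E k (incB_transp E s t W u) = (\<Sum>v\<in>W. u v \<bullet> incB E s t W k v)"
proof -
  have "inner_on E k (incB_transp E s t W u) = (\<Sum>x\<in>E. \<Sum>v\<in>W. incid s t v x * (k x \<bullet> u v))"
    unfolding inner_on_def incB_transp_def by (simp add: inner_sum_right)
  also have "\<dots> = (\<Sum>v\<in>W. \<Sum>x\<in>E. incid s t v x * (k x \<bullet> u v))" by (rule sum.swap)
  also have "\<dots> = (\<Sum>v\<in>W. u v \<bullet> incB E s t W k v)"
    unfolding incB_def by (simp add: inner_sum_right inner_commute)
  finally show ?thesis .
qed

lemma incB_eq_0_if_orthogonal:
  fixes k :: "'e \<Rightarrow> 'r::euclidean_space"
  assumes "finite W"
    and "\<forall>v\<in>W. \<forall>b\<in>Basis. inner_on E k (incB_transp E s t W (0(v := b))) = 0"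
  shows "incB E s t W k = 0"
proof
  fix v
  show "incB E s t W k v = 0 v"
  proof (cases "v \<in> W")
    case True
    have "b \<bullet> incB E s t W k v = 0" if "b \<in> Basis" for b
    proof -
      have "b \<bullet> incB E s t W k v = (\<Sum>v'\<in>W. if v' = v then b \<bullet> incB E s t W k v else 0)"
        using assms(1) True by simp
      also have "\<dots> = (\<Sum>v'\<in>W. (0(v := b)) v' \<bullet> incB E s t W k v')"
        by (rule sum.cong) simp_all
      also have "\<dots> = inner_on E k (incB_transp E s t W (0(v := b)))"
        by (simp only: inner_on_incB_transp)
      also have "\<dots> = 0" using assms(2) True that by blast
      finally show ?thesis .
    qed
    then have "incB E s t W k v = 0" by (metis euclidean_all_zero_iff inner_commute)
    then show ?thesis by simp
  qed (simp add: incB_def)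
qed

lemma exists_incB_transp_decomposition:
  fixes g :: "'e \<Rightarrow> 'r::euclidean_space"
  assumes "finite E" and "finite W"
  shows "\<exists>u\<in>prim_space W. incB E s t W (g - incB_transp E s t W u) = 0"
proof -
  define A :: "('e \<Rightarrow> 'r) set" where "A = (\<lambda>(v, b). incB_transp E s t W (0(v := b))) ` (W \<times> Basis)"
  have "finite A" using assms(2) by (simp add: A_def)
  then obtain p where "p \<in> prim.span A" and p: "\<forall>a\<in>A. inner_on E (g - p) a = 0"
    using exists_projection_onto_span[OF assms(1)] by blast
  moreover have "prim.span A \<subseteq> incB_transp E s t W ` prim_space W"
    by (rule prim.span_minimal[OF _ subspace_incB_transp_image]) (auto simp: A_def prim_space_def)
  ultimately obtain u where "u \<in> prim_space W" "p = incB_transp E s t W u" by blast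
  moreover have "incB E s t W (g - p) = 0"
    using p assms(2) by (intro incB_eq_0_if_orthogonal) (auto simp: A_def)
  ultimately show ?thesis by blast
qed

lemma riesz_incB_adj: "riesz (incB_adj E s t W e) = incB_transp E s t W (riesz e)"
  by (auto simp: riesz_def incB_adj_def incB_transp_def fun_eq_iff scaleR_sum_right scaleR_sum_left
      intro: sum.swap)

subsection \<open>A linear isomorphism onto the flow space\<close>

definition kirchhoff_flow_map ::
  "'e set \<Rightarrow> ('e \<Rightarrow> 'v) \<Rightarrow> ('e \<Rightarrow> 'v) \<Rightarrow> 'v set \<Rightarrow> ('e,'v,'r::euclidean_space) flow \<times> ('e,'v,'r) effort \<Rightarrow> ('e,'v,'r) flow"
  where "kirchhoff_flow_map E s t Vb q =
    (fst (fst q) - riesz (fst (snd q)) - riesz (incB_adj E s t Vb (snd (snd q))), riesz (snd (snd q)))"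

lemma linear_kirchhoff_flow_map:
  "Vector_Spaces.linear scale_bond scale_flow
     (kirchhoff_flow_map E s t Vb :: ('e,'v,'r::euclidean_space) flow \<times> ('e,'v,'r) effort \<Rightarrow> _)"
  unfolding Vector_Spaces.linear_iff
proof (intro conjI allI vector_space_scale_bond vector_space_scale_flow)
  fix x y :: "('e,'v,'r) flow \<times> ('e,'v,'r) effort"
  show "kirchhoff_flow_map E s t Vb (x + y) = kirchhoff_flow_map E s t Vb x + kirchhoff_flow_map E s t Vb y"
    by (simp add: kirchhoff_flow_map_def riesz_add incB_adj_add algebra_simps)
next
  fix c :: real and x :: "('e,'v,'r) flow \<times> ('e,'v,'r) effort"
  have "scale_prim c (a - b - d) = scale_prim c a - scale_prim c b - scale_prim c d" for a b d :: "'e \<Rightarrow> 'r"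
    by (simp add: scale_prim_def fun_eq_iff algebra_simps)
  then show "kirchhoff_flow_map E s t Vb (scale_bond c x) = scale_flow c (kirchhoff_flow_map E s t Vb x)"
    by (simp add: kirchhoff_flow_map_def scale_bond_def scale_flow_def riesz_scale incB_adj_scale)
qed

lemma kirchhoff_flow_map_eq_0:
  assumes "finite E" and q: "q \<in> kirchhoff_dirac V E s t Vb" and "kirchhoff_flow_map E s t Vb q = 0"
  shows "q = 0"
proof -
  obtain f1 fb e1 eb where qe: "q = ((f1, fb), (e1, eb))" by (metis prod.collapse)
  from q obtain e0 where e0: "e0 \<in> dual_space (V - Vb)"
      "e1 = - incB_adj E s t (V - Vb) e0 - incB_adj E s t Vb eb"
    and mem: "f1 \<in> prim_space E" "e1 \<in> dual_space E" "eb \<in> dual_space Vb"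
      "incB E s t (V - Vb) f1 = 0" "incB E s t Vb f1 = fb"
    unfolding qe mem_kirchhoff_dirac by blast
  from assms(3) have "f1 = riesz e1 + riesz (incB_adj E s t Vb eb)" "riesz eb = 0"
    by (simp_all add: kirchhoff_flow_map_def qe zero_prod_def diff_eq_eq)
  then have eb: "eb = 0" and f1: "f1 = riesz e1"
    using riesz_eq_0_iff[OF mem(3)] by (simp_all add: incB_adj_zero riesz_zero)
  have "f1 + incB_transp E s t (V - Vb) (riesz e0) = 0"
    by (simp add: f1 e0(2) eb incB_adj_zero riesz_diff riesz_uminus riesz_zero riesz_incB_adj)
  then have "inner_on E f1 f1 + inner_on E f1 (incB_transp E s t (V - Vb) (riesz e0)) = 0"
    by (metis inner_on_add_right inner_on_zero_right)
  \<comment> \<open>\<open>ker B\<^sub>i\<close> is orthogonal to \<open>im B\<^sub>i\<^sup>T\<close>\<close>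
  then have "inner_on E f1 f1 = 0" by (simp add: inner_on_incB_transp mem(4))
  then have "f1 = 0"
    using inner_on_self_eq_0[OF assms(1)] mem(1) by (auto simp: prim_space_def fun_eq_iff)
  moreover have "e1 = 0" using riesz_eq_0_iff[OF mem(2)] f1 \<open>f1 = 0\<close> by simp
  ultimately show ?thesis using qe eb mem(5) by (simp add: incB_zero zero_prod_def)
qed

lemma kirchhoff_flow_map_image:
  fixes E :: "'e set" and Vb :: "'v set"
  assumes "finite E" and "finite (V - Vb)"
  shows "kirchhoff_flow_map E s t Vb ` kirchhoff_dirac V E s t Vb
    = (flow_space E Vb :: ('e,'v,'r::euclidean_space) flow set)"
proof (rule equalityI)
  show "kirchhoff_flow_map E s t Vb ` kirchhoff_dirac V E s t Vb \<subseteq> (flow_space E Vb :: ('e,'v,'r) flow set)"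
    by (auto simp: kirchhoff_dirac_def kirchhoff_flow_map_def flow_space_def
        intro!: prim_space_diff riesz_in_prim_space incB_adj_in_dual_space)
next
  show "(flow_space E Vb :: ('e,'v,'r) flow set) \<subseteq> kirchhoff_flow_map E s t Vb ` kirchhoff_dirac V E s t Vb"
  proof
    fix y :: "('e,'v,'r) flow"
    assume "y \<in> flow_space E Vb"
    then obtain g h where y: "y = (g, h)" "g \<in> prim_space E" "h \<in> prim_space Vb"
      by (auto simp: flow_space_def)
    obtain u where u: "u \<in> prim_space (V - Vb)" "incB E s t (V - Vb) (g - incB_transp E s t (V - Vb) u) = 0"
      using exists_incB_transp_decomposition[OF assms] by blast
    define f1 where "f1 = g - incB_transp E s t (V - Vb) u"
    define e0 where "e0 = inner_dual u"
    define eb where "eb = inner_dual h"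
    define e1 where "e1 = - incB_adj E s t (V - Vb) e0 - incB_adj E s t Vb eb"
    have e0: "e0 \<in> dual_space (V - Vb)" and eb: "eb \<in> dual_space Vb"
      using u(1) y(3) by (simp_all add: e0_def eb_def inner_dual_in_dual_space)
    have "f1 = g - riesz (incB_adj E s t (V - Vb) e0)"
      by (simp add: f1_def e0_def riesz_incB_adj riesz_inner_dual)
    then have "((f1, incB E s t Vb f1), (e1, eb)) \<in> kirchhoff_dirac V E s t Vb"
      unfolding mem_kirchhoff_dirac using y(2) e0 eb u(2)
      by (auto simp: f1_def e1_def incB_in_prim_space
          intro!: prim_space_diff riesz_in_prim_space incB_adj_in_dual_space dual_space_diff dual_space_uminus)
    moreover have "kirchhoff_flow_map E s t Vb ((f1, incB E s t Vb f1), (e1, eb)) = y"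
      by (simp add: kirchhoff_flow_map_def y(1) f1_def e1_def e0_def eb_def riesz_diff riesz_uminus
          riesz_incB_adj riesz_inner_dual)
    ultimately show "y \<in> kirchhoff_flow_map E s t Vb ` kirchhoff_dirac V E s t Vb" by (metis image_eqI)
  qed
qed

theorem proposition6p1:
  fixes V :: "'v set" and E :: "'e set" and src tgt :: "'e \<Rightarrow> 'v" and Vb :: "'v set"
  assumes "open_digraph V E src tgt Vb"
  shows "separable_dirac E Vb (kirchhoff_dirac V E src tgt Vb :: (('e,'v,'r::euclidean_space) flow \<times> ('e,'v,'r) effort) set)"
proof -
  let ?D = "kirchhoff_dirac V E src tgt Vb :: (('e,'v,'r) flow \<times> ('e,'v,'r) effort) set"
  let ?L = "kirchhoff_flow_map E src tgt Vb :: ('e,'v,'r) flow \<times> ('e,'v,'r) effort \<Rightarrow> _"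
  have fin: "finite E" "finite (V - Vb)" using assms by (auto simp: open_digraph_def)
  have separable: "\<forall>(fa, ea)\<in>?D. \<forall>(fb, eb)\<in>?D. flow_pairing E Vb ea fb = 0"
    by (auto intro: flow_pairing_kirchhoff_dirac)
  interpret L: Vector_Spaces.linear scale_bond scale_flow ?L by (rule linear_kirchhoff_flow_map)
  have "inj_on ?L ?D"
    using kirchhoff_flow_map_eq_0[OF fin(1)] L.inj_on_iff_eq_0[OF subspace_kirchhoff_dirac] by blast
  then have "L.vs2.dim (?L ` ?D) = bond.dim ?D"
    by (rule dim_image_eq_of_inj_on[OF linear_kirchhoff_flow_map subspace_kirchhoff_dirac])
  then have "bond.dim ?D = L.vs2.dim (flow_space E Vb)"
    by (simp add: kirchhoff_flow_map_image[OF fin])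
  moreover have "\<forall>(f, e)\<in>?D. flow_pairing E Vb e f = 0"
    by (auto intro: flow_pairing_kirchhoff_dirac)
  ultimately show ?thesis
    unfolding separable_dirac_def dirac_structure_def
    using subspace_kirchhoff_dirac[of V E src tgt Vb] kirchhoff_dirac_subset[of V E src tgt Vb] separable
    by blast
qed

end
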